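(* Let $r\ge 3$, let $\mathcal{H}$ be a $\mathrm{T}_r$-free $r$-graph with $\delta_{r-1}^{+}(\mathcal{H})\ge r$, and let $e=\{u_1,\ldots,u_r\}\in\mathcal{H}$ be an edge. Then $N_{\mathcal{H}}(e\setminus\{u_i\})\cap N_{\mathcal{H}}(u_i)=\emptyset$ for every $i\in[r]$. Moreover, the sets $N_{\mathcal{H}}(e\setminus\{u_1\}),\ldots,N_{\mathcal{H}}(e\setminus\{u_r\})$ are pairwise disjoint and each of them is independent in $\mathcal{H}$.
   Context: An $r$-graph $\mathcal{H}$ is a collection of $r$-subsets (edges) of a finite vertex set $V(\mathcal{H})$. The shadow is $\partial\mathcal{H}=\{e\in\binom{V(\mathcal{H})}{r-1}\colon e\subseteq E \text{ for some } E\in\mathcal{H}\}$. For $f\in\partial\mathcal{H}$, $N_{\mathcal{H}}(f)=\{v\in V(\mathcal{H})\colon f\cup\{v\}\in\mathcal{H}\}$. For a vertex $v$, $N_{\mathcal{H}}(v)=\{u\in V(\mathcal{H})\setminus\{v\}\colon \{u,v\}\subseteq E \text{ for some } E\in\mathcal{H}\}$. The minimum positive codegree is $\delta_{r-1}^{+}(\mathcal{H})=\min\{|N_{\mathcal{H}}(f)|\colon f\in\partial\mathcal{H}\}$. A set $I\subseteq V(\mathcal{H})$ is independent in $\mathcal{H}$ if every edge of $\mathcal{H}$ contains at most one vertex of $I$. The $r$-uniform generalized triangle is $\mathrm{T}_r=\{\{1,\ldots,r-1,r\},\{1,\ldots,r-1,r+1\},\{r,r+1,\ldots,2r-1\}\}$;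 $\mathcal{H}$ is $\mathrm{T}_r$-free if it contains no subhypergraph isomorphic to $\mathrm{T}_r$. *)

theory Defs
  imports Main
begin

definition r_graph :: "nat \<Rightarrow> 'a set \<Rightarrow> 'a set set \<Rightarrow> bool" where
  "r_graph r V H \<longleftrightarrow> finite V \<and> (\<forall>E\<in>H. E \<subseteq> V \<and> card E = r)"

definition shadow :: "nat \<Rightarrow> 'a set set \<Rightarrow> 'a set set" where
  "shadow r H = {e. card e = r - 1 \<and> (\<exists>E\<in>H. e \<subseteq> E)}"

definition codeg_nbhd :: "'a set \<Rightarrow> 'a set set \<Rightarrow> 'a set \<Rightarrow> 'a set" where
  "codeg_nbhd V H f = {v\<in>V. f \<union> {v} \<in> H}"

definition vertex_nbhd :: "'a set \<Rightarrow> 'a set set \<Rightarrow> 'a \<Rightarrow> 'a set" where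
  "vertex_nbhd V H v = {u\<in>V - {v}. \<exists>E\<in>H. {u, v} \<subseteq> E}"

definition min_pos_codeg_ge :: "nat \<Rightarrow> 'a set \<Rightarrow> 'a set set \<Rightarrow> nat \<Rightarrow> bool" where
  "min_pos_codeg_ge r V H k \<longleftrightarrow> (\<forall>f\<in>shadow r H. k \<le> card (codeg_nbhd V H f))"

definition independent :: "'a set set \<Rightarrow> 'a set \<Rightarrow> bool" where
  "independent H I \<longleftrightarrow> (\<forall>E\<in>H. card (E \<inter> I) \<le> 1)"

definition gen_triangle :: "nat \<Rightarrow> nat set set" where
  "gen_triangle r = {{1..r}, {1..<r} \<union> {r+1}, {r..2*r-1}}"

definition Tr_free :: "nat \<Rightarrow> 'a set \<Rightarrow> 'a set set \<Rightarrow> bool" where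
  "Tr_free r V H \<longleftrightarrow> \<not> (\<exists>\<phi>. inj_on \<phi> {1..2*r-1} \<and> \<phi> ` {1..2*r-1} \<subseteq> V \<and>
      (\<forall>T\<in>gen_triangle r. \<phi> ` T \<in> H))"

end

theory Submission
  imports Defs
begin

text \<open>
  Call \<open>x \<noteq> y\<close> twins over an \<open>(r-1)\<close>-set \<open>S\<close> if \<open>S \<union> {x}\<close> and \<open>S \<union> {y}\<close> are both edges.
  The key fact is that no edge contains two twins. An edge \<open>E\<close> through \<open>x\<close> and \<open>y\<close> disjoint
  from \<open>S\<close> completes a copy of \<open>T\<^sub>r\<close>. Otherwise pick \<open>E\<close> with \<open>|E \<inter> S|\<close> minimal and
  \<open>w \<in> E \<inter> S\<close>: every vertex \<open>z\<close> with \<open>(E - {w}) \<union> {z}\<close> an edge must lie in \<open>S\<close>, by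
  minimality, so the codegree of \<open>E - {w}\<close> is at most \<open>|S| = r - 1\<close>, contradicting the
  minimum positive codegree bound \<open>r\<close>. All three claims are instances: for an edge \<open>e\<close> and \<open>u \<in> e\<close>, the vertex
  \<open>u\<close> and every vertex of \<open>N(e - {u})\<close> are twins over \<open>e - {u}\<close>.
\<close>

lemma r_graph_edge:
  assumes "r_graph r V H" and "E \<in> H"
  shows "E \<subseteq> V" and "finite E" and "card E = r"
  using assms finite_subset by (auto simp: r_graph_def)

lemma not_Tr_free_if_triangle:
  assumes "r \<ge> 2" and rg: "r_graph r V H"
    and Sx: "S \<union> {x} \<in> H" and Sy: "S \<union> {y} \<in> H"
    and "x \<noteq> y" "x \<notin> S" "y \<notin> S" and cS: "card S = r - 1"
    and C: "C \<in> H" "x \<in> C" "y \<in> C" "C \<inter> S = {}"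
  shows "\<not> Tr_free r V H"
proof -
  have SV: "S \<subseteq> V" and finS: "finite S" using r_graph_edge[OF rg Sx] by auto
  note C_props = r_graph_edge[OF rg C(1)]
  define C' where "C' = C - {x, y}"
  have "card {1..<r} = card S" using cS by simp
  then obtain g where g: "bij_betw g {1..<r} S"
    using finite_same_card_bij finS by blast
  have "card {r+2..2*r-1} = card C'"
    using C_props assms by (simp add: C'_def card_Diff_subset)
  then obtain h where h: "bij_betw h {r+2..2*r-1} C'"
    using finite_same_card_bij C_props(2) C'_def by blast
  define \<phi> where
    "\<phi> = (\<lambda>k. if k < r then g k else if k = r then x else if k = r + 1 then y else h k)"
  have "\<phi> ` {1..<r} = g ` {1..<r}" by (rule image_cong) (auto simp: \<phi>_def)
  then have \<phi>_low: "\<phi> ` {1..<r} = S" using g by (simp add: bij_betw_def)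
  have "\<phi> ` {r+2..2*r-1} = h ` {r+2..2*r-1}" by (rule image_cong) (auto simp: \<phi>_def)
  then have "\<phi> ` {r+2..2*r-1} = C'" using h by (simp add: bij_betw_def)
  moreover have \<phi>_xy: "\<phi> r = x" "\<phi> (r + 1) = y" by (auto simp: \<phi>_def)
  moreover have "{r..2*r-1} = {r, r + 1} \<union> {r+2..2*r-1}" using \<open>r \<ge> 2\<close> by auto
  ultimately have \<phi>_high: "\<phi> ` {r..2*r-1} = C" using C by (auto simp: C'_def)
  have "{1..r} = insert r {1..<r}" using \<open>r \<ge> 2\<close> by auto
  then have "\<phi> ` {1..r} = S \<union> {x}" and "\<phi> ` ({1..<r} \<union> {r+1}) = S \<union> {y}"
    using \<phi>_low \<phi>_xy by auto
  then have copy: "\<forall>T\<in>gen_triangle r. \<phi> ` T \<in> H"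
    using Sx Sy C \<phi>_high by (simp add: gen_triangle_def)
  have "{1..2*r-1} = {1..<r} \<union> {r..2*r-1}" using \<open>r \<ge> 2\<close> by auto
  then have image: "\<phi> ` {1..2*r-1} = S \<union> C" using \<phi>_low \<phi>_high by auto
  then have "card (\<phi> ` {1..2*r-1}) = card {1..2*r-1}"
    using C(4) finS C_props cS \<open>r \<ge> 2\<close> by (simp add: card_Un_disjoint inf_commute)
  then have "inj_on \<phi> {1..2*r-1}" by (simp add: eq_card_imp_inj_on)
  then show ?thesis
    using copy image SV C_props unfolding Tr_free_def by blast
qed

locale Tr_free_min_codeg =
  fixes r :: nat and V :: "'a set" and H :: "'a set set"
  assumes r_ge_2: "r \<ge> 2"
    and r_graph: "r_graph r V H"
    and Tr_free: "Tr_free r V H"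
    and min_codeg: "min_pos_codeg_ge r V H r"
begin

lemmas edge = r_graph_edge[OF r_graph]

lemma codeg_nbhd_edge:
  assumes "card S = r - 1" and "v \<in> codeg_nbhd V H S"
  shows "S \<union> {v} \<in> H" and "v \<notin> S"
proof -
  show edge_Sv: "S \<union> {v} \<in> H" using assms(2) by (simp add: codeg_nbhd_def)
  show "v \<notin> S"
  proof
    assume "v \<in> S"
    then have "card (S \<union> {v}) = r - 1" using assms(1) by (simp add: insert_absorb)
    then show False using edge(3)[OF edge_Sv] r_ge_2 by simp
  qed
qed

lemma codeg_of_edge_minus_vertex:
  assumes "E \<in> H" and "w \<in> E"
  shows "r \<le> card (codeg_nbhd V H (E - {w}))"
proof -
  have "card (E - {w}) = r - 1" using edge[OF assms(1)] assms(2) by simp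
  then have "E - {w} \<in> shadow r H" using assms by (auto simp: shadow_def)
  then show ?thesis using min_codeg by (simp add: min_pos_codeg_ge_def)
qed

lemma no_edge_through_twins:
  assumes Sx: "S \<union> {x} \<in> H" and Sy: "S \<union> {y} \<in> H"
    and xy: "x \<noteq> y" "x \<notin> S" "y \<notin> S" and cS: "card S = r - 1"
    and E: "E \<in> H" "x \<in> E" "y \<in> E"
  shows False
  using E
proof (induction "card (E \<inter> S)" arbitrary: E rule: less_induct)
  case less
  have finS: "finite S" using edge(2)[OF Sx] by simp
  show False
  proof (cases "E \<inter> S = {}")
    case True
    then show False
      using not_Tr_free_if_triangle[OF r_ge_2 r_graph Sx Sy xy cS less.prems] Tr_free by blast
  next
    case False
    then obtain w where w: "w \<in> E" "w \<in> S" by blast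
    have "codeg_nbhd V H (E - {w}) \<subseteq> S"
    proof
      fix z assume z: "z \<in> codeg_nbhd V H (E - {w})"
      show "z \<in> S"
      proof (rule ccontr)
        assume "z \<notin> S"
        then have "(E - {w} \<union> {z}) \<inter> S = E \<inter> S - {w}" by auto
        then have "card ((E - {w} \<union> {z}) \<inter> S) < card (E \<inter> S)"
          using w finS by (metis IntI card_Diff1_less finite_Int)
        moreover have "E - {w} \<union> {z} \<in> H" using z by (simp add: codeg_nbhd_def)
        moreover have "x \<in> E - {w} \<union> {z}" "y \<in> E - {w} \<union> {z}" using less.prems w xy by auto
        ultimately show False using less.hyps by blast
      qed
    qed
    then have "card (codeg_nbhd V H (E - {w})) \<le> r - 1" using card_mono finS cS by metis
    then show False using codeg_of_edge_minus_vertex[OF less.prems(1) w(1)] r_ge_2 by simp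
  qed
qed

context
  fixes e u
  assumes e: "e \<in> H" and u: "u \<in> e"
begin

lemma card_edge_minus_vertex: "card (e - {u}) = r - 1"
  using edge[OF e] u by simp

lemma codeg_nbhd_disjoint_vertex_nbhd:
  "codeg_nbhd V H (e - {u}) \<inter> vertex_nbhd V H u = {}"
proof (intro equals0I)
  fix v assume v: "v \<in> codeg_nbhd V H (e - {u}) \<inter> vertex_nbhd V H u"
  then obtain E where "E \<in> H" "u \<in> E" "v \<in> E" "v \<noteq> u" by (auto simp: vertex_nbhd_def)
  moreover have "e - {u} \<union> {u} \<in> H" using e u by (simp add: insert_absorb)
  ultimately show False
    using no_edge_through_twins codeg_nbhd_edge card_edge_minus_vertex v by blast
qed

lemma independent_codeg_nbhd: "independent H (codeg_nbhd V H (e - {u}))"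
  unfolding independent_def
proof
  fix E assume E: "E \<in> H"
  have "v = w" if "v \<in> E \<inter> codeg_nbhd V H (e - {u})" "w \<in> E \<inter> codeg_nbhd V H (e - {u})" for v w
    using that no_edge_through_twins codeg_nbhd_edge card_edge_minus_vertex E by blast
  then show "card (E \<inter> codeg_nbhd V H (e - {u})) \<le> 1"
    using edge(2)[OF E] by (simp add: card_le_Suc0_iff_eq)
qed

end

lemma codeg_nbhds_of_edge_disjoint:
  assumes e: "e \<in> H" and "u \<in> e" "w \<in> e" "u \<noteq> w"
  shows "codeg_nbhd V H (e - {u}) \<inter> codeg_nbhd V H (e - {w}) = {}"
proof -
  have "codeg_nbhd V H (e - {w}) \<subseteq> vertex_nbhd V H u"
  proof
    fix v assume v: "v \<in> codeg_nbhd V H (e - {w})"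
    have "e - {w} \<union> {v} \<in> H" "v \<notin> e - {w}"
      using codeg_nbhd_edge[OF card_edge_minus_vertex[OF assms(1,3)] v] by auto
    moreover have "v \<in> V" using v by (simp add: codeg_nbhd_def)
    moreover have "{u, v} \<subseteq> e - {w} \<union> {v}" using assms(2,4) by blast
    ultimately show "v \<in> vertex_nbhd V H u"
      using assms(2,4) unfolding vertex_nbhd_def by blast
  qed
  then show ?thesis using codeg_nbhd_disjoint_vertex_nbhd[OF assms(1,2)] by blast
qed

end

theorem lemma2p2:
  fixes r :: nat and V :: "'a set" and H :: "'a set set" and u :: "nat \<Rightarrow> 'a"
  assumes "r \<ge> 3"
    and "r_graph r V H"
    and "Tr_free r V H"
    and "min_pos_codeg_ge r V H r"
    and "inj_on u {1..r}"
    and e_def: "e = u ` {1..r}"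
    and "e \<in> H"
  shows "(\<forall>i\<in>{1..r}. codeg_nbhd V H (e - {u i}) \<inter> vertex_nbhd V H (u i) = {})
       \<and> (\<forall>i\<in>{1..r}. \<forall>j\<in>{1..r}. i \<noteq> j \<longrightarrow>
            codeg_nbhd V H (e - {u i}) \<inter> codeg_nbhd V H (e - {u j}) = {})
       \<and> (\<forall>i\<in>{1..r}. independent H (codeg_nbhd V H (e - {u i})))"
proof -
  interpret Tr_free_min_codeg r V H
    using assms(1-4) by unfold_locales simp_all
  have u_in_e: "u i \<in> e" if "i \<in> {1..r}" for i using e_def that by blast
  have "u i \<noteq> u j" if "i \<in> {1..r}" "j \<in> {1..r}" "i \<noteq> j" for i j
    using assms(5) that by (meson inj_on_contraD)
  then show ?thesis
    using u_in_e assms(7) codeg_nbhd_disjoint_vertex_nbhd codeg_nbhds_of_edge_disjoint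
      independent_codeg_nbhd by simp
qed

end
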